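(* For problem (D) with $\Psi_\mu=\Psi_{0,\mu}$: (i) every stationary point of (D) is a local minimizer of $G$; (ii) if $w^*=[y^*;z^*]$ is a local minimizer of $G$ with $G(w^* )<\infty$ and the Slater condition $$\{w=[y;z]:\ -A^\top y-B^\top z\in\operatorname{ri}(\operatorname{dom}f^* ),\ y\in\operatorname{ri}(\operatorname{dom}g^* ),\ z_{\bar T_*}=0\}\neq\emptyset$$ holds, where $T_*=\{i:z^*_i\ne0\}$, $\bar T_*=[r]\setminus T_*$, and "$\operatorname{ri}$" may be omitted for $f^*$ (resp. $g^*$) when it is polyhedral, then $w^*$ is a stationary point of (D).
   Context: Let $f:\mathbb R^n\to(-\infty,\infty]$, $g:\mathbb R^m\to(-\infty,\infty]$ be proper, lsc and convex with conjugates $f^*,g^*$; $A\in\mathbb R^{m\times n}$, $B\in\mathbb R^{r\times n}$, $b\in\mathbb R^r$, $\mu\in\mathbb R^r$, $\mu>0$. For $w=[y;z]\in\mathbb R^m\times\mathbb R^r$: $\Xi(w)=f^*(-A^\top y-B^\top z)+g^*(y)+\langle b,z\rangle$, $\Psi_{0,\mu}(z)=\sum_i\mu_i\mathbf 1_{\{z_i\neq0\}}$, and (D) is $\min_w G(w)=\Xi(w)+\Psi_{0,\mu}(z)$. $\partial$ is the limiting subdifferential; $\partial\Psi_{0,\mu}(z)=\{u:u_i\in\mathbb R\text{ if }z_i=0,\ u_i=0\text{ otherwise}\}$. $w^*$ is a stationary point of (D) if there exist $x\in\partial f^*(-A^\top y^*-B^\top z^* )$, $v\in\partial g^*(y^*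 )$, $u\in\partial\Psi_{0,\mu}(z^* )$ with $Ax=v$ and $Bx=b+u$. $\operatorname{ri}$ denotes relative interior. *)

theory Defs
  imports "HOL-Analysis.Analysis" "HOL-Library.Extended_Real"
begin

definition epi :: "('a::euclidean_space \<Rightarrow> ereal) \<Rightarrow> ('a \<times> real) set" where
  "epi h = {(x, t). h x \<le> ereal t}"

definition edom :: "('a::euclidean_space \<Rightarrow> ereal) \<Rightarrow> 'a set" where
  "edom h = {x. h x < \<infinity>}"

definition proper_fun :: "('a::euclidean_space \<Rightarrow> ereal) \<Rightarrow> bool" where
  "proper_fun h \<longleftrightarrow> (\<forall>x. h x \<noteq> -\<infinity>) \<and> (\<exists>x. h x < \<infinity>)"

definition lsc_fun :: "('a::euclidean_space \<Rightarrow> ereal) \<Rightarrow> bool" where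
  "lsc_fun h \<longleftrightarrow> closed (epi h)"

definition convex_fun :: "('a::euclidean_space \<Rightarrow> ereal) \<Rightarrow> bool" where
  "convex_fun h \<longleftrightarrow> convex (epi h)"

definition polyhedral_fun :: "('a::euclidean_space \<Rightarrow> ereal) \<Rightarrow> bool" where
  "polyhedral_fun h \<longleftrightarrow> polyhedron (epi h)"

definition fconj :: "('a::euclidean_space \<Rightarrow> ereal) \<Rightarrow> 'a \<Rightarrow> ereal" where
  "fconj h y = (SUP x. ereal (inner x y) - h x)"

text \<open>Frechet (regular) subdifferential: h finite at x and
  liminf_{u -> x, u ~= x} (h u - h x - <v, u - x>) / |u - x| >= 0.\<close>
definition frechet_subdiff :: "('a::euclidean_space \<Rightarrow> ereal) \<Rightarrow> 'a \<Rightarrow> 'a set" where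
  "frechet_subdiff h x = {v. \<bar>h x\<bar> \<noteq> \<infinity> \<and>
     (\<forall>e>0. \<exists>d>0. \<forall>u. norm (u - x) < d \<longrightarrow>
        ereal (real_of_ereal (h x) + inner v (u - x) - e * norm (u - x)) \<le> h u)}"

definition limiting_subdiff :: "('a::euclidean_space \<Rightarrow> ereal) \<Rightarrow> 'a \<Rightarrow> 'a set" where
  "limiting_subdiff h x = {v. \<exists>xs vs. xs \<longlonglongrightarrow> x \<and> (\<lambda>k. h (xs k)) \<longlonglongrightarrow> h x \<and>
      (\<forall>k. vs k \<in> frechet_subdiff h (xs k)) \<and> vs \<longlonglongrightarrow> v}"

definition Psi0 :: "real^'r \<Rightarrow> real^'r \<Rightarrow> real" where
  "Psi0 \<mu> z = (\<Sum>i\<in>UNIV. \<mu> $ i * (if z $ i \<noteq> 0 then 1 else 0))"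

text \<open>The limiting subdifferential of Psi0 as given in the paper.\<close>
definition subdiff_Psi0 :: "real^'r \<Rightarrow> (real^'r) set" where
  "subdiff_Psi0 z = {u. \<forall>i. z $ i \<noteq> 0 \<longrightarrow> u $ i = 0}"

definition Xi :: "(real^'n \<Rightarrow> ereal) \<Rightarrow> (real^'m \<Rightarrow> ereal) \<Rightarrow> real^'n^'m \<Rightarrow> real^'n^'r
      \<Rightarrow> real^'r \<Rightarrow> (real^'m) \<times> (real^'r) \<Rightarrow> ereal" where
  "Xi f g A B b w = (case w of (y, z) \<Rightarrow>
     fconj f (- (transpose A *v y) - (transpose B *v z)) + fconj g y + ereal (inner b z))"

definition Gobj :: "(real^'n \<Rightarrow> ereal) \<Rightarrow> (real^'m \<Rightarrow> ereal) \<Rightarrow> real^'n^'m \<Rightarrow> real^'n^'r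
      \<Rightarrow> real^'r \<Rightarrow> real^'r \<Rightarrow> (real^'m) \<times> (real^'r) \<Rightarrow> ereal" where
  "Gobj f g A B b \<mu> w = Xi f g A B b w + ereal (Psi0 \<mu> (snd w))"

definition stationary_D :: "(real^'n \<Rightarrow> ereal) \<Rightarrow> (real^'m \<Rightarrow> ereal) \<Rightarrow> real^'n^'m \<Rightarrow> real^'n^'r
      \<Rightarrow> real^'r \<Rightarrow> (real^'m) \<times> (real^'r) \<Rightarrow> bool" where
  "stationary_D f g A B b w = (case w of (y, z) \<Rightarrow>
     (\<exists>x v u. x \<in> limiting_subdiff (fconj f) (- (transpose A *v y) - (transpose B *v z)) \<and>
              v \<in> limiting_subdiff (fconj g) y \<and> u \<in> subdiff_Psi0 z \<and>
              A *v x = v \<and> B *v x = b + u))"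

definition local_minimizer :: "('a::metric_space \<Rightarrow> ereal) \<Rightarrow> 'a \<Rightarrow> bool" where
  "local_minimizer h w \<longleftrightarrow> (\<exists>e>0. \<forall>w'. dist w' w < e \<longrightarrow> h w \<le> h w')"

definition slater_D :: "(real^'n \<Rightarrow> ereal) \<Rightarrow> (real^'m \<Rightarrow> ereal) \<Rightarrow> real^'n^'m \<Rightarrow> real^'n^'r
      \<Rightarrow> real^'r \<Rightarrow> bool" where
  "slater_D f g A B zs \<longleftrightarrow> (\<exists>y z.
     - (transpose A *v y) - (transpose B *v z) \<in>
        (if polyhedral_fun (fconj f) then edom (fconj f) else rel_interior (edom (fconj f))) \<and>
     y \<in> (if polyhedral_fun (fconj g) then edom (fconj g) else rel_interior (edom (fconj g))) \<and>
     (\<forall>i. zs $ i = 0 \<longrightarrow> z $ i = 0))"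

end

(* Both parts rest on the convexity of the conjugates f* and g* (only properness of f and g is
   needed for it), for which the limiting subdifferential is the subdifferential of convex analysis.

   (i) The stationarity data x, v, u give the global bound Xi w' >= Xi w - <u, z' - z>, while near z
   the jump mu_i > 0 of the l0 penalty off the support of z dominates the linear term <u, z' - z>.

   (ii) Near w*, the penalty is constant on the coordinate subspace S of the support of z*, so w*
   minimizes the convex function Xi over the subspace UNIV x S. The optimality condition for this
   problem is obtained by moving each polyhedral conjugate into a polyhedral epigraph constraint,
   separating the epigraph of the resulting objective from the constraint set inside the affine
   hull of its domain (where the Slater point is a relative interior point), and splitting the
   normal cone of an intersection of polyhedra by Farkas' lemma. *)

theory Submission
  imports Defs
begin

section \<open>Normal cones of polyhedra\<close>

lemma inner_self_nonpos_imp_zero: "(a::'a::real_inner) \<bullet> a \<le> 0 \<Longrightarrow> a = 0"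
  by (meson inner_gt_zero_iff not_le)

definition normal_cone :: "'a::euclidean_space set \<Rightarrow> 'a \<Rightarrow> 'a set" where
  "normal_cone P x = {n. \<forall>y\<in>P. n \<bullet> (y - x) \<le> 0}"

lemma convex_cone_normal_cone: "convex_cone (normal_cone P x)"
proof -
  have "normal_cone P x = \<Inter>((\<lambda>y. {n. (y - x) \<bullet> n \<le> 0}) ` P)"
    by (auto simp: normal_cone_def inner_commute)
  also have "convex_cone \<dots>"
    by (rule convex_cone_Inter) (auto simp: convex_cone_halfspace_le)
  finally show ?thesis .
qed

lemma normal_cone_UNIV: "normal_cone UNIV x = {0}"
proof -
  have "n = 0" if "n \<in> normal_cone UNIV x" for n
  proof -
    have "n \<bullet> ((x + n) - x) \<le> 0"
      using that unfolding normal_cone_def by blast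
    then have "n \<bullet> n \<le> 0" by simp
    then show ?thesis by (rule inner_self_nonpos_imp_zero)
  qed
  then show ?thesis by (auto simp: normal_cone_def)
qed

lemma normal_cone_Times:
  assumes "a \<in> P" "b \<in> R"
  shows "normal_cone (P \<times> R) (a, b) = normal_cone P a \<times> normal_cone R b"
proof (intro set_eqI iffI)
  fix nm :: "'a \<times> 'b" assume nm: "nm \<in> normal_cone (P \<times> R) (a, b)"
  have "fst nm \<bullet> (y - a) + snd nm \<bullet> (z - b) \<le> 0" if "y \<in> P" "z \<in> R" for y z
    using nm that unfolding normal_cone_def by (fastforce simp: inner_prod_def)
  from this[OF _ assms(2)] this[OF assms(1)] show "nm \<in> normal_cone P a \<times> normal_cone R b"
    by (simp add: normal_cone_def mem_Times_iff)
next
  fix nm :: "'a \<times> 'b" assume "nm \<in> normal_cone P a \<times> normal_cone R b"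
  then show "nm \<in> normal_cone (P \<times> R) (a, b)"
    by (auto simp: normal_cone_def inner_prod_def mem_Times_iff intro: add_nonpos_nonpos)
qed

lemma normal_cone_affine_orthogonal:
  assumes "affine S" "x \<in> S" "y \<in> S" "n \<in> normal_cone S x"
  shows "n \<bullet> (y - x) = 0"
proof -
  have "x + (-1) *\<^sub>R (y - x) \<in> S"
    using assms by (intro mem_affine_3_minus)
  then have "n \<bullet> ((x + (-1) *\<^sub>R (y - x)) - x) \<le> 0" "n \<bullet> (y - x) \<le> 0"
    using assms(3,4) unfolding normal_cone_def by blast+
  then show ?thesis by (simp add: inner_diff_right)
qed

lemma normal_cone_subspace_orthogonal:
  assumes "subspace G" "x \<in> G" "n \<in> normal_cone G x" "y \<in> G"
  shows "n \<bullet> y = 0"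
proof -
  have "x + y \<in> G" using assms(1,2,4) by (rule subspace_add)
  then have "n \<bullet> ((x + y) - x) = 0"
    using assms(1-3) by (intro normal_cone_affine_orthogonal subspace_imp_affine)
  then show ?thesis by simp
qed

lemma linear_vimage_halfspace:
  fixes L :: "'a::euclidean_space \<Rightarrow> 'b::euclidean_space"
  assumes "linear L"
  shows "L -` {x. a \<bullet> x \<le> b} = {x. adjoint L a \<bullet> x \<le> b}"
proof -
  have "L x \<bullet> a = x \<bullet> adjoint L a" for x
    by (rule adjoint_works[OF assms, symmetric])
  then show ?thesis by (simp add: inner_commute)
qed

lemma polyhedron_halfspaces:
  assumes "polyhedron P"
  obtains H where "finite H" "P = {y. \<forall>(a, b)\<in>H. a \<bullet> y \<le> b}"
proof -
  obtain F where F: "finite F" "P = \<Inter>F" "\<forall>h\<in>F. \<exists>a b. a \<noteq> 0 \<and> h = {x. a \<bullet> x \<le> b}"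
    using assms unfolding polyhedron_def by blast
  from F(3) have "\<forall>h\<in>F. \<exists>ab. h = {y. fst ab \<bullet> y \<le> snd ab}" by force
  then have "\<exists>c. \<forall>h\<in>F. h = {y. fst (c h) \<bullet> y \<le> snd (c h)}" by (rule bchoice)
  then obtain c where c: "\<And>h. h \<in> F \<Longrightarrow> h = {y. fst (c h) \<bullet> y \<le> snd (c h)}" by blast
  have "P = {y. \<forall>(a, b)\<in>c ` F. a \<bullet> y \<le> b}"
    unfolding F(2) by (subst (1) Inter_eq) (use c in force)
  moreover have "finite (c ` F)" using F(1) by simp
  ultimately show thesis using that by blast
qed

lemma polyhedron_linear_vimage:
  fixes L :: "'a::euclidean_space \<Rightarrow> 'b::euclidean_space"
  assumes "linear L" "polyhedron P"
  shows "polyhedron (L -` P)"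
proof -
  obtain H where "finite H" "P = {y. \<forall>(a, b)\<in>H. a \<bullet> y \<le> b}"
    using polyhedron_halfspaces[OF assms(2)] .
  then have "L -` P = \<Inter>((\<lambda>(a, b). L -` {y. a \<bullet> y \<le> b}) ` H)" by auto
  then show ?thesis
    using \<open>finite H\<close> by (auto simp del: vimage_Collect_eq
        simp: linear_vimage_halfspace[OF assms(1)] polyhedron_halfspace_le)
qed

lemma polyhedron_Times:
  fixes P :: "'a::euclidean_space set" and R :: "'b::euclidean_space set"
  assumes "polyhedron P" "polyhedron R"
  shows "polyhedron (P \<times> R)"
proof -
  have "polyhedron (fst -` P \<inter> snd -` R)"
    using polyhedron_linear_vimage[OF linear_fst assms(1)] polyhedron_linear_vimage[OF linear_snd assms(2)]
    by (rule polyhedron_Int)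
  moreover have "fst -` P \<inter> snd -` R = P \<times> R" by auto
  ultimately show ?thesis by (simp only:)
qed

text \<open>Only the constraints active at \<open>x\<close> matter: the inactive ones stay strict near \<open>x\<close>.\<close>
lemma polyhedron_feasible_directions:
  assumes "polyhedron P" "x \<in> P"
  obtains X where "finite X" "X \<subseteq> normal_cone P x"
    "\<And>d. (\<And>a. a \<in> X \<Longrightarrow> a \<bullet> d \<le> 0) \<Longrightarrow> eventually (\<lambda>t. x + t *\<^sub>R d \<in> P) (at_right 0)"
proof -
  obtain H where H: "finite H" and P: "P = {y. \<forall>(a, b)\<in>H. a \<bullet> y \<le> b}"
    using polyhedron_halfspaces[OF assms(1)] .
  define X where "X = fst ` {(a, b)\<in>H. a \<bullet> x = b}"
  show thesis
  proof
    show "finite X" unfolding X_def using H by (auto intro: finite_subset)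
    show "X \<subseteq> normal_cone P x"
      unfolding X_def normal_cone_def P by (force simp: inner_diff_right)
  next
    fix d assume obtuse: "\<And>c. c \<in> X \<Longrightarrow> c \<bullet> d \<le> 0"
    have "eventually (\<lambda>t. a \<bullet> (x + t *\<^sub>R d) \<le> b) (at_right 0)" if "(a, b) \<in> H" for a b
    proof (cases "a \<bullet> x = b")
      case True
      then have "a \<bullet> d \<le> 0" using obtuse that unfolding X_def by force
      show ?thesis
        using eventually_at_right_less[of 0]
        by (rule eventually_mono) (use True \<open>a \<bullet> d \<le> 0\<close> in \<open>simp add: inner_add_right mult_nonneg_nonpos\<close>)
    next
      case False
      with assms(2) that have "a \<bullet> x < b" unfolding P by force
      moreover have "((\<lambda>t. a \<bullet> (x + t *\<^sub>R d)) \<longlongrightarrow> a \<bullet> x) (at_right 0)"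
        by (auto intro!: tendsto_eq_intros)
      ultimately show ?thesis
        by (auto dest: order_tendstoD(2) elim!: eventually_mono)
    qed
    then have "eventually (\<lambda>t. \<forall>(a, b)\<in>H. a \<bullet> (x + t *\<^sub>R d) \<le> b) (at_right 0)"
      using H by (auto simp: eventually_ball_finite_distrib)
    then show "eventually (\<lambda>t. x + t *\<^sub>R d \<in> P) (at_right 0)"
      unfolding P by simp
  qed
qed

lemma farkas_cone_separation:
  fixes n :: "'a::euclidean_space"
  assumes "finite X" "n \<notin> convex_cone hull X"
  obtains d where "\<And>a. a \<in> X \<Longrightarrow> a \<bullet> d \<le> 0" "0 < n \<bullet> d"
proof -
  define K where "K = convex_cone hull X"
  have "convex K" "closed K"
    unfolding K_def using assms(1) by (simp_all add: closed_convex_cone_hull convex_convex_cone_hull)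
  with assms(2) obtain c \<beta> where c: "c \<bullet> n < \<beta>" "\<And>k. k \<in> K \<Longrightarrow> \<beta> < c \<bullet> k"
    unfolding K_def by (metis separating_hyperplane_closed_point)
  have \<beta>: "\<beta> < 0" using c(2)[of 0] unfolding K_def by (simp add: convex_cone_hull_contains_0)
  have c_nonneg: "0 \<le> c \<bullet> k" if "k \<in> K" for k
  proof (rule ccontr)
    assume "\<not> 0 \<le> c \<bullet> k"
    then have "(\<beta> / (c \<bullet> k)) *\<^sub>R k \<in> K"
      using that \<beta> conic_convex_cone_hull unfolding K_def
      by (intro conicD) (auto simp: divide_nonpos_neg)
    then have "\<beta> < c \<bullet> ((\<beta> / (c \<bullet> k)) *\<^sub>R k)" by (rule c(2))
    then show False using \<open>\<not> 0 \<le> c \<bullet> k\<close> by simp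
  qed
  show thesis
  proof
    fix a assume "a \<in> X"
    then have "a \<in> K" unfolding K_def by (rule hull_inc)
    then show "a \<bullet> (-c) \<le> 0" using c_nonneg by (simp add: inner_commute)
  next
    show "0 < n \<bullet> (-c)" using c(1) \<beta> by (simp add: inner_commute)
  qed
qed

lemma normal_cone_Int_polyhedra:
  assumes "polyhedron P" "polyhedron R" "x \<in> P" "x \<in> R" "n \<in> normal_cone (P \<inter> R) x"
  obtains n1 n2 where "n1 \<in> normal_cone P x" "n2 \<in> normal_cone R x" "n = n1 + n2"
proof -
  obtain X1 where X1: "finite X1" "X1 \<subseteq> normal_cone P x"
    "\<And>d. (\<And>a. a \<in> X1 \<Longrightarrow> a \<bullet> d \<le> 0) \<Longrightarrow> eventually (\<lambda>t. x + t *\<^sub>R d \<in> P) (at_right 0)"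
    using polyhedron_feasible_directions[OF assms(1,3)] by blast
  obtain X2 where X2: "finite X2" "X2 \<subseteq> normal_cone R x"
    "\<And>d. (\<And>a. a \<in> X2 \<Longrightarrow> a \<bullet> d \<le> 0) \<Longrightarrow> eventually (\<lambda>t. x + t *\<^sub>R d \<in> R) (at_right 0)"
    using polyhedron_feasible_directions[OF assms(2,4)] by blast
  define N where "N = (\<Union>n1\<in>normal_cone P x. \<Union>n2\<in>normal_cone R x. {n1 + n2})"
  have "n \<in> convex_cone hull (X1 \<union> X2)"
  proof (rule ccontr)
    assume "n \<notin> convex_cone hull (X1 \<union> X2)"
    then obtain d where d: "\<And>a. a \<in> X1 \<union> X2 \<Longrightarrow> a \<bullet> d \<le> 0" "0 < n \<bullet> d"
      using farkas_cone_separation[of "X1 \<union> X2"] X1(1) X2(1) by blast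
    have "eventually (\<lambda>t. x + t *\<^sub>R d \<in> P) (at_right 0)" using d(1) by (intro X1(3)) blast
    moreover have "eventually (\<lambda>t. x + t *\<^sub>R d \<in> R) (at_right 0)" using d(1) by (intro X2(3)) blast
    ultimately have "eventually (\<lambda>t. 0 < t \<and> x + t *\<^sub>R d \<in> P \<inter> R) (at_right 0)"
      using eventually_at_right_less[of 0] by eventually_elim simp
    from eventually_happens'[OF trivial_limit_at_right_real this]
    obtain t where "0 < t" "x + t *\<^sub>R d \<in> P \<inter> R" by blast
    then have "t * (n \<bullet> d) \<le> 0"
      using assms(5) unfolding normal_cone_def by force
    with \<open>0 < t\<close> d(2) show False by (simp add: mult_le_0_iff)
  qed
  moreover have "convex_cone hull (X1 \<union> X2) \<subseteq> N"
  proof (rule hull_minimal)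
    have "0 \<in> normal_cone P x" "0 \<in> normal_cone R x" by (simp_all add: normal_cone_def)
    then have "a + 0 \<in> N" "0 + b \<in> N" if "a \<in> normal_cone P x" "b \<in> normal_cone R x" for a b
      using that unfolding N_def by blast+
    then show "X1 \<union> X2 \<subseteq> N" using X1(2) X2(2) \<open>0 \<in> normal_cone P x\<close> \<open>0 \<in> normal_cone R x\<close>
      by (metis Un_subset_iff add_0 add.right_neutral subset_iff)
    show "convex_cone N" unfolding N_def by (intro convex_cone_sums convex_cone_normal_cone)
  qed
  ultimately obtain n1 n2 where "n1 \<in> normal_cone P x" "n2 \<in> normal_cone R x" "n = n1 + n2"
    unfolding N_def by blast
  then show thesis by (rule that)
qed

section \<open>Convex extended-real functions\<close>

lemma convex_funD:
  assumes "convex_fun h" "h x \<le> ereal a" "h y \<le> ereal b" "0 \<le> u" "0 \<le> v" "u + v = 1"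
  shows "h (u *\<^sub>R x + v *\<^sub>R y) \<le> ereal (u * a + v * b)"
proof -
  have "(x, a) \<in> epi h" "(y, b) \<in> epi h" using assms(2,3) by (simp_all add: epi_def)
  then have "u *\<^sub>R (x, a) + v *\<^sub>R (y, b) \<in> epi h"
    using assms(1,4-6) unfolding convex_fun_def by (intro convexD)
  then show ?thesis by (simp add: epi_def)
qed

lemma convex_funI:
  assumes "\<And>x y a b u v. h x \<le> ereal a \<Longrightarrow> h y \<le> ereal b \<Longrightarrow> 0 \<le> u \<Longrightarrow> 0 \<le> v \<Longrightarrow> u + v = 1
    \<Longrightarrow> h (u *\<^sub>R x + v *\<^sub>R y) \<le> ereal (u * a + v * b)"
  shows "convex_fun h"
  unfolding convex_fun_def
proof (rule convexI)
  fix p q :: "'a \<times> real" and u v :: real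
  assume "p \<in> epi h" "q \<in> epi h" "0 \<le> u" "0 \<le> v" "u + v = 1"
  then show "u *\<^sub>R p + v *\<^sub>R q \<in> epi h"
    using assms[of "fst p" "snd p" "fst q" "snd q" u v] by (simp add: epi_def case_prod_beta)
qed

lemma le_ereal_real_of_ereal: "h < \<infinity> \<Longrightarrow> h \<le> ereal (real_of_ereal h)"
  by (cases h) auto

lemma convex_edom:
  assumes "convex_fun h"
  shows "convex (edom h)"
proof (rule convexI)
  fix x y and u v :: real
  assume "x \<in> edom h" "y \<in> edom h" "0 \<le> u" "0 \<le> v" "u + v = 1"
  then have "h (u *\<^sub>R x + v *\<^sub>R y) \<le> ereal (u * real_of_ereal (h x) + v * real_of_ereal (h y))"
    using assms by (intro convex_funD) (auto simp: edom_def le_ereal_real_of_ereal)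
  then show "u *\<^sub>R x + v *\<^sub>R y \<in> edom h"
    using le_less_trans[OF _ ereal_less_PInfty] by (simp add: edom_def)
qed

lemma convex_fun_add:
  assumes "convex_fun \<phi>" "convex_fun \<psi>" "\<And>x. \<phi> x \<noteq> -\<infinity>" "\<And>x. \<psi> x \<noteq> -\<infinity>"
  shows "convex_fun (\<lambda>x. \<phi> x + \<psi> x)"
proof (rule convex_funI)
  fix x y a b and u v :: real
  assume x: "\<phi> x + \<psi> x \<le> ereal a" and y: "\<phi> y + \<psi> y \<le> ereal b"
    and uv: "0 \<le> u" "0 \<le> v" "u + v = 1"
  obtain p q where pq: "\<phi> x = ereal p" "\<psi> x = ereal q" "p + q \<le> a"
    using x assms(3,4)[of x] by (cases "\<phi> x"; cases "\<psi> x") auto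
  obtain p' q' where pq': "\<phi> y = ereal p'" "\<psi> y = ereal q'" "p' + q' \<le> b"
    using y assms(3,4)[of y] by (cases "\<phi> y"; cases "\<psi> y") auto
  have "\<phi> (u *\<^sub>R x + v *\<^sub>R y) + \<psi> (u *\<^sub>R x + v *\<^sub>R y)
      \<le> ereal (u * p + v * p') + ereal (u * q + v * q')"
    using pq pq' uv assms(1,2) by (intro add_mono convex_funD) auto
  also have "\<dots> \<le> ereal (u * a + v * b)"
  proof -
    have "u * (p + q) + v * (p' + q') \<le> u * a + v * b"
      using pq(3) pq'(3) uv by (intro add_mono mult_left_mono) auto
    then show ?thesis by (simp add: algebra_simps)
  qed
  finally show "\<phi> (u *\<^sub>R x + v *\<^sub>R y) + \<psi> (u *\<^sub>R x + v *\<^sub>R y) \<le> ereal (u * a + v * b)" .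
qed

lemma convex_fun_linear_comp:
  assumes "convex_fun \<phi>" "linear L"
  shows "convex_fun (\<lambda>x. \<phi> (L x))"
proof (rule convex_funI)
  fix x y a b and u v :: real
  assume "\<phi> (L x) \<le> ereal a" "\<phi> (L y) \<le> ereal b" "0 \<le> u" "0 \<le> v" "u + v = 1"
  then have "\<phi> (u *\<^sub>R L x + v *\<^sub>R L y) \<le> ereal (u * a + v * b)"
    by (rule convex_funD[OF assms(1)])
  then show "\<phi> (L (u *\<^sub>R x + v *\<^sub>R y)) \<le> ereal (u * a + v * b)"
    using assms(2) by (simp add: linear_add linear_scale)
qed

lemma convex_fun_linear:
  assumes "linear l"
  shows "convex_fun (\<lambda>x. ereal (l x))"
  using assms by (auto intro!: convex_funI simp: linear_add linear_scale add_mono mult_left_mono)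

lemma convex_fun_sum_prod:
  assumes "convex_fun \<phi>" "convex_fun \<psi>" "\<And>x. \<phi> x \<noteq> -\<infinity>" "\<And>y. \<psi> y \<noteq> -\<infinity>"
  shows "convex_fun (\<lambda>p. \<phi> (fst p) + \<psi> (snd p))"
proof (rule convex_fun_add)
  show "convex_fun (\<lambda>p. \<phi> (fst p))" by (rule convex_fun_linear_comp[OF assms(1) linear_fst])
  show "convex_fun (\<lambda>p. \<psi> (snd p))" by (rule convex_fun_linear_comp[OF assms(2) linear_snd])
qed (use assms in auto)

lemma fconj_neq_minf:
  assumes "proper_fun f"
  shows "fconj f p \<noteq> -\<infinity>"
proof -
  obtain x where "f x < \<infinity>" "f x \<noteq> -\<infinity>" using assms unfolding proper_fun_def by blast
  moreover have "ereal (x \<bullet> p) - f x \<le> fconj f p" unfolding fconj_def by (rule SUP_upper) simp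
  ultimately show ?thesis by (cases "f x") auto
qed

lemma convex_fun_fconj:
  assumes "proper_fun f"
  shows "convex_fun (fconj f)"
proof (rule convex_funI)
  fix p q a b and u v :: real
  assume p: "fconj f p \<le> ereal a" and q: "fconj f q \<le> ereal b" and uv: "0 \<le> u" "0 \<le> v" "u + v = 1"
  show "fconj f (u *\<^sub>R p + v *\<^sub>R q) \<le> ereal (u * a + v * b)"
    unfolding fconj_def
  proof (rule SUP_least)
    fix x
    show "ereal (x \<bullet> (u *\<^sub>R p + v *\<^sub>R q)) - f x \<le> ereal (u * a + v * b)"
    proof (cases "f x")
      case (real r)
      have "ereal (x \<bullet> p') - f x \<le> fconj f p'" for p'
        unfolding fconj_def by (rule SUP_upper) simp
      from order_trans[OF this p] order_trans[OF this q]
      have "ereal (x \<bullet> p) - f x \<le> ereal a" "ereal (x \<bullet> q) - f x \<le> ereal b" .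
      then have "u * (x \<bullet> p - r) + v * (x \<bullet> q - r) \<le> u * a + v * b"
        using real uv by (intro add_mono mult_left_mono) auto
      moreover have "u * (x \<bullet> p - r) + v * (x \<bullet> q - r) = x \<bullet> (u *\<^sub>R p + v *\<^sub>R q) - (u + v) * r"
        by (simp add: inner_add_right algebra_simps)
      ultimately have "x \<bullet> (u *\<^sub>R p + v *\<^sub>R q) - r \<le> u * a + v * b" using uv(3) by simp
      then show ?thesis using real by simp
    next
      case MInf
      moreover have "f x \<noteq> -\<infinity>" using assms unfolding proper_fun_def by blast
      ultimately show ?thesis by simp
    qed simp
  qed
qed

lemma local_minimizer_iff_eventually:
  "local_minimizer h w \<longleftrightarrow> eventually (\<lambda>w'. h w \<le> h w') (nhds w)"
  unfolding local_minimizer_def eventually_nhds_metric by simp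

lemma convex_local_min_imp_min:
  assumes "convex_fun h" "\<And>u. h u \<noteq> -\<infinity>" "convex S" "x \<in> S" "h x < \<infinity>"
    and loc: "eventually (\<lambda>y. y \<in> S \<longrightarrow> h x \<le> h y) (nhds x)" and "y \<in> S"
  shows "h x \<le> h y"
proof (cases "h y")
  case (real s)
  obtain r where r: "h x = ereal r" using assms(2,5) by (cases "h x") auto
  have "((\<lambda>t. (1 - t) *\<^sub>R x + t *\<^sub>R y) \<longlongrightarrow> (1 - 0) *\<^sub>R x + 0 *\<^sub>R y) (at_right 0)"
    by (intro tendsto_intros)
  then have near: "eventually (\<lambda>t. (1 - t) *\<^sub>R x + t *\<^sub>R y \<in> S \<longrightarrow> h x \<le> h ((1 - t) *\<^sub>R x + t *\<^sub>R y)) (at_right 0)"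
    using eventually_compose_filterlim[OF loc] by simp
  have segment: "(1 - t) *\<^sub>R x + t *\<^sub>R y \<in> S" if "t \<in> {0<..<1}" for t
    using assms(3,4,7) that by (intro convexD) auto
  have "eventually (\<lambda>t. t \<in> {0<..<1} \<and> h x \<le> h ((1 - t) *\<^sub>R x + t *\<^sub>R y)) (at_right 0)"
    using near eventually_at_right_real[OF zero_less_one] by eventually_elim (use segment in blast)
  from eventually_happens'[OF trivial_limit_at_right_real this]
  obtain t where t: "0 < t" "t < 1" and le: "h x \<le> h ((1 - t) *\<^sub>R x + t *\<^sub>R y)" by auto
  have "h ((1 - t) *\<^sub>R x + t *\<^sub>R y) \<le> ereal ((1 - t) * r + t * s)"
    using t r real by (intro convex_funD[OF assms(1)]) auto
  with le have "h x \<le> ereal ((1 - t) * r + t * s)" by (rule order_trans)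
  then have "t * r \<le> t * s" using r by (simp add: algebra_simps)
  then show ?thesis using r real t(1) by simp
qed (use assms(2) in simp_all)

section \<open>Subdifferentials\<close>

definition convex_subdiff :: "('a::euclidean_space \<Rightarrow> ereal) \<Rightarrow> 'a \<Rightarrow> 'a set" where
  "convex_subdiff h x = {g. \<bar>h x\<bar> \<noteq> \<infinity> \<and> (\<forall>y. h x + ereal (g \<bullet> (y - x)) \<le> h y)}"

lemma convex_subdiff_subset_frechet: "convex_subdiff h x \<subseteq> frechet_subdiff h x"
proof
  fix g assume "g \<in> convex_subdiff h x"
  then obtain r where r: "h x = ereal r" and sub: "\<And>y. ereal (r + g \<bullet> (y - x)) \<le> h y"
    unfolding convex_subdiff_def by (cases "h x") auto
  have "ereal (r + g \<bullet> (y - x) - e * norm (y - x)) \<le> h y" if "0 < e" for e y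
    using order_trans[OF _ sub[of y]] that by simp
  then show "g \<in> frechet_subdiff h x"
    unfolding frechet_subdiff_def using r by auto
qed

lemma convex_subdiff_subset_limiting: "convex_subdiff h x \<subseteq> limiting_subdiff h x"
proof
  fix g assume "g \<in> convex_subdiff h x"
  then have "g \<in> frechet_subdiff h x" using convex_subdiff_subset_frechet by blast
  then show "g \<in> limiting_subdiff h x"
    unfolding limiting_subdiff_def by (intro CollectI exI[of _ "\<lambda>k. x"] exI[of _ "\<lambda>k. g"]) auto
qed

text \<open>For a convex function the Frechet inequality, which only holds up to \<open>e * norm (u - x)\<close>
  near \<open>x\<close>, propagates along the segment to \<open>y\<close>.\<close>
lemma frechet_subdiff_convex_approx:
  assumes "convex_fun h" "g \<in> frechet_subdiff h x" "h x = ereal r" "h y = ereal s" "0 < e"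
  shows "r + g \<bullet> (y - x) \<le> s + e * norm (y - x)"
proof -
  define N where "N = norm (y - x)"
  obtain d where "0 < d"
    and d: "\<And>u. norm (u - x) < d \<Longrightarrow> ereal (r + g \<bullet> (u - x) - e * norm (u - x)) \<le> h u"
    using assms(2,3,5) unfolding frechet_subdiff_def by auto
  have "((\<lambda>t. t * N) \<longlongrightarrow> 0 * N) (at_right 0)" by (intro tendsto_intros)
  then have "eventually (\<lambda>t. t * N < d) (at_right 0)"
    using \<open>0 < d\<close> by (auto dest: order_tendstoD(2))
  then have "eventually (\<lambda>t. t \<in> {0<..<1} \<and> t * N < d) (at_right 0)"
    using eventually_at_right_real[OF zero_less_one] by (simp add: eventually_conj_iff)
  from eventually_happens'[OF trivial_limit_at_right_real this]
  obtain t where t: "0 < t" "t < 1" "t * N < d" by auto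
  define w where "w = (1 - t) *\<^sub>R x + t *\<^sub>R y"
  have "w - x = t *\<^sub>R (y - x)" by (simp add: w_def algebra_simps)
  then have w: "w - x = t *\<^sub>R (y - x)" "norm (w - x) = t * N"
    using t by (simp_all add: N_def)
  have "h w \<le> ereal ((1 - t) * r + t * s)"
    unfolding w_def using t assms(3,4) by (intro convex_funD[OF assms(1)]) auto
  moreover have "ereal (r + t * (g \<bullet> (y - x)) - e * (t * N)) \<le> h w"
    using d[of w] w t by simp
  ultimately have "ereal (r + t * (g \<bullet> (y - x)) - e * (t * N)) \<le> ereal ((1 - t) * r + t * s)"
    by (rule order_trans[rotated])
  then have "t * (r + g \<bullet> (y - x)) \<le> t * (s + e * N)"
    by (simp add: algebra_simps)
  then show ?thesis using t(1) by (simp add: N_def)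
qed

lemma frechet_subdiff_subset_convex:
  assumes "convex_fun h" "\<And>u. h u \<noteq> -\<infinity>"
  shows "frechet_subdiff h x \<subseteq> convex_subdiff h x"
proof
  fix g assume g: "g \<in> frechet_subdiff h x"
  then obtain r where r: "h x = ereal r" unfolding frechet_subdiff_def by (cases "h x") auto
  have "ereal (r + g \<bullet> (y - x)) \<le> h y" for y
  proof (cases "h y")
    case (real s)
    note approx = frechet_subdiff_convex_approx[OF assms(1) g r real]
    show ?thesis
    proof (cases "y = x")
      case True
      then show ?thesis using approx[of 1] real by simp
    next
      case False
      then have "r + g \<bullet> (y - x) \<le> s + \<epsilon>" if "0 < \<epsilon>" for \<epsilon>
        using approx[of "\<epsilon> / norm (y - x)"] that by simp
      then show ?thesis using real by (simp add: field_le_epsilon)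
    qed
  qed (use assms(2) in auto)
  then show "g \<in> convex_subdiff h x" unfolding convex_subdiff_def using r by simp
qed

lemma limiting_subdiff_convex:
  assumes "convex_fun h" "\<And>u. h u \<noteq> -\<infinity>"
  shows "limiting_subdiff h x = convex_subdiff h x"
proof
  show "limiting_subdiff h x \<subseteq> convex_subdiff h x"
  proof
    fix g assume "g \<in> limiting_subdiff h x"
    then obtain xs gs where xs: "xs \<longlonglongrightarrow> x" and hxs: "(\<lambda>k. h (xs k)) \<longlonglongrightarrow> h x"
      and gs: "\<And>k. gs k \<in> frechet_subdiff h (xs k)" "gs \<longlonglongrightarrow> g"
      unfolding limiting_subdiff_def by blast
    have "gs k \<in> convex_subdiff h (xs k)" for k
      using frechet_subdiff_subset_convex[OF assms] gs(1) by blast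
    then have sub: "h (xs k) + ereal (gs k \<bullet> (y - xs k)) \<le> h y" "\<bar>h (xs k)\<bar> \<noteq> \<infinity>" for k y
      unfolding convex_subdiff_def by auto
    have bound: "h x \<le> ereal (s - g \<bullet> (y - x))" if "h y = ereal s" for y s
    proof (rule LIMSEQ_le[OF hxs])
      show "(\<lambda>k. ereal (s - gs k \<bullet> (y - xs k))) \<longlonglongrightarrow> ereal (s - g \<bullet> (y - x))"
        using xs gs(2) by (intro tendsto_intros)
      have "h (xs k) \<le> ereal (s - gs k \<bullet> (y - xs k))" for k
        using sub(1)[of k y] that by (cases "h (xs k)") auto
      then show "\<exists>N. \<forall>n\<ge>N. h (xs n) \<le> ereal (s - gs n \<bullet> (y - xs n))" by blast
    qed
    obtain s0 where "h (xs 0) = ereal s0" using sub(2)[of 0] by (cases "h (xs 0)") auto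
    from bound[OF this] obtain r where r: "h x = ereal r"
      using assms(2)[of x] by (cases "h x") auto
    have "h x + ereal (g \<bullet> (y - x)) \<le> h y" for y
    proof (cases "h y")
      case (real s)
      then show ?thesis using bound[OF real] r by simp
    qed (use assms(2) in auto)
    then show "g \<in> convex_subdiff h x" unfolding convex_subdiff_def using r by simp
  qed
  show "convex_subdiff h x \<subseteq> limiting_subdiff h x" by (rule convex_subdiff_subset_limiting)
qed

lemma convex_subdiff_linear:
  assumes "g \<in> convex_subdiff (\<lambda>z. ereal (c \<bullet> z)) z"
  shows "g = c"
proof -
  have "\<forall>y. c \<bullet> z + g \<bullet> (y - z) \<le> c \<bullet> y" using assms by (simp add: convex_subdiff_def)
  then have "c \<bullet> z + g \<bullet> ((z + (g - c)) - z) \<le> c \<bullet> (z + (g - c))" by blast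
  then have "(g - c) \<bullet> (g - c) \<le> 0" by (simp add: algebra_simps inner_diff_left inner_diff_right inner_commute)
  then have "g - c = 0" by (rule inner_self_nonpos_imp_zero)
  then show ?thesis by simp
qed

lemma convex_subdiff_sum_prod:
  assumes "g \<in> convex_subdiff (\<lambda>p. \<phi> (fst p) + \<psi> (snd p)) (a, b)" "\<bar>\<phi> a\<bar> \<noteq> \<infinity>" "\<bar>\<psi> b\<bar> \<noteq> \<infinity>"
  shows "fst g \<in> convex_subdiff \<phi> a" "snd g \<in> convex_subdiff \<psi> b"
proof -
  obtain p q where pq: "\<phi> a = ereal p" "\<psi> b = ereal q" using assms(2,3) by auto
  have sub: "ereal (p + q + (fst g \<bullet> (y - a) + snd g \<bullet> (z - b))) \<le> \<phi> y + \<psi> z" for y z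
    using assms(1) pq unfolding convex_subdiff_def by (auto simp: inner_prod_def dest: spec[of _ "(y, z)"])
  have "\<phi> a + ereal (fst g \<bullet> (y - a)) \<le> \<phi> y" for y
    using sub[of y b] pq by (cases "\<phi> y") auto
  then show "fst g \<in> convex_subdiff \<phi> a" using pq by (simp add: convex_subdiff_def)
  have "\<psi> b + ereal (snd g \<bullet> (z - b)) \<le> \<psi> z" for z
    using sub[of a z] pq by (cases "\<psi> z") auto
  then show "snd g \<in> convex_subdiff \<psi> b" using pq by (simp add: convex_subdiff_def)
qed

lemma convex_subdiff_add_normal_affine_hull:
  assumes "g \<in> convex_subdiff h x" "n \<in> normal_cone (affine hull edom h) x"
  shows "g + n \<in> convex_subdiff h x"
proof -
  have "x \<in> affine hull edom h"
    using assms(1) hull_subset[of "edom h"] by (force simp: convex_subdiff_def edom_def)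
  have "h x + ereal ((g + n) \<bullet> (y - x)) \<le> h y" for y
  proof (cases "h y = \<infinity>")
    case False
    then have "y \<in> affine hull edom h" using hull_subset[of "edom h"] by (force simp: edom_def)
    then have "n \<bullet> (y - x) = 0"
      using \<open>x \<in> affine hull edom h\<close> assms(2) by (intro normal_cone_affine_orthogonal) auto
    then show ?thesis using assms(1) by (simp add: convex_subdiff_def inner_add_left)
  qed simp
  then show ?thesis using assms(1) by (simp add: convex_subdiff_def)
qed

section \<open>Minimizing a convex function over a polyhedron\<close>

lemma nonneg_of_nonneg_below:
  fixes c \<alpha> s :: real
  assumes "\<And>t. t < s \<Longrightarrow> 0 \<le> c + \<alpha> * (s - t)"
  shows "0 \<le> c"
proof -
  have "((\<lambda>t. c + \<alpha> * (s - t)) \<longlongrightarrow> c + \<alpha> * (s - s)) (at_left s)"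
    by (intro tendsto_intros)
  moreover have "eventually (\<lambda>t. 0 \<le> c + \<alpha> * (s - t)) (at_left s)"
    using eventually_at_left_real[of "s - 1" s] by (auto intro: assms elim: eventually_mono)
  ultimately show ?thesis by (simp add: tendsto_lowerbound)
qed

text \<open>The epigraph of \<open>h\<close> is separated from the points of \<open>Q\<close> in the affine hull of the domain
  lying strictly below the minimum; separating within the span of the difference set makes the
  horizontal part \<open>a\<close> of the normal parallel to that affine hull.\<close>
lemma convex_min_epigraph_separation:
  fixes h :: "'a::euclidean_space \<Rightarrow> ereal"
  assumes "convex_fun h" "convex Q" "xs \<in> Q" "h xs = ereal hs"
    and min: "\<And>x. x \<in> Q \<Longrightarrow> h xs \<le> h x"
  obtains a \<alpha> where "(a, \<alpha>) \<noteq> 0" "xs + a \<in> affine hull edom h"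
    "\<And>x t x' t'. h x \<le> ereal t \<Longrightarrow> x' \<in> Q \<inter> affine hull edom h \<Longrightarrow> t' < hs
      \<Longrightarrow> 0 \<le> a \<bullet> (x - x') + \<alpha> * (t - t')"
proof -
  define A where "A = affine hull edom h"
  define S where "S = (\<Union>p\<in>epi h. \<Union>q\<in>(Q \<inter> A) \<times> {..<hs}. {p - q})"
  have xsA: "xs \<in> A" using assms(4) hull_subset[of "edom h"] by (force simp: A_def edom_def)
  have "convex S"
    unfolding S_def using assms(1,2) affine_imp_convex[of A]
    by (intro convex_differences convex_Times convex_Int) (auto simp: convex_fun_def A_def)
  moreover have "(xs, hs) \<in> epi h" "(xs, hs - 1) \<in> (Q \<inter> A) \<times> {..<hs}"
    using assms(3,4) xsA by (simp_all add: epi_def)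
  then have "(xs, hs) - (xs, hs - 1) \<in> S" unfolding S_def by blast
  moreover have "0 \<notin> S"
  proof
    assume "0 \<in> S"
    then obtain x t where x: "h x \<le> ereal t" "x \<in> Q" "t < hs" by (auto simp: S_def epi_def)
    then have "ereal hs \<le> h x" using min assms(4) by metis
    then have "ereal hs \<le> ereal t" using x(1) by (rule order_trans)
    then show False using x(3) by simp
  qed
  ultimately obtain c where c: "c \<in> span S" "c \<noteq> 0" "\<And>s. s \<in> S \<Longrightarrow> 0 \<le> c \<bullet> s"
    using separating_hyperplane_set_0_inspan by blast
  have "fst ` S \<subseteq> (\<lambda>x. x - xs) ` A"
  proof
    fix d assume "d \<in> fst ` S"
    then obtain x x' where x: "x \<in> edom h" "x' \<in> A" "d = x - x'"
      by (force simp: S_def epi_def edom_def)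
    then have "xs + 1 *\<^sub>R (x - x') \<in> A"
      using xsA hull_subset[of "edom h"] by (intro mem_affine_3_minus) (auto simp: A_def)
    then show "d \<in> (\<lambda>x. x - xs) ` A" using x(3) by force
  qed
  then have "span (fst ` S) \<subseteq> (\<lambda>x. x - xs) ` A"
    using affine_diffs_subspace_subtract[OF _ xsA] by (intro span_minimal) (auto simp: A_def)
  moreover have "fst c \<in> span (fst ` S)"
    using c(1) span_linear_image[OF linear_fst, of S] by blast
  ultimately have "xs + fst c \<in> A" by force
  moreover have "0 \<le> fst c \<bullet> (x - x') + snd c * (t - t')"
    if "h x \<le> ereal t" "x' \<in> Q \<inter> A" "t' < hs" for x t x' t'
  proof -
    have "(x, t) - (x', t') \<in> S" unfolding S_def using that by (force simp: epi_def)
    from c(3)[OF this] show ?thesis by (simp add: inner_prod_def)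
  qed
  ultimately show thesis using that[of "fst c" "snd c"] c(2) by (simp add: A_def)
qed

text \<open>The hypotheses \<open>xs, xs + a \<in> affine hull D\<close> say that \<open>a\<close> is parallel to the affine hull;
  moving from \<open>x0\<close> against \<open>a\<close> then stays in \<open>D\<close>.\<close>
lemma rel_interior_minimizer_parallel_zero:
  fixes a :: "'a::euclidean_space"
  assumes x0: "x0 \<in> rel_interior D" and "xs \<in> affine hull D" "xs + a \<in> affine hull D"
    and min: "\<And>x. x \<in> D \<Longrightarrow> 0 \<le> a \<bullet> (x - x0)"
  shows "a = 0"
proof (rule ccontr)
  assume "a \<noteq> 0"
  obtain e where "0 < e" and e: "ball x0 e \<inter> affine hull D \<subseteq> D"
    using x0 unfolding mem_rel_interior_ball by blast
  define \<delta> where "\<delta> = e / (2 * norm a)"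
  have "x0 \<in> D" using x0 rel_interior_subset by blast
  then have "x0 \<in> affine hull D" by (rule hull_inc)
  then have "x0 + (- \<delta>) *\<^sub>R ((xs + a) - xs) \<in> affine hull D"
    using assms(2,3) by (intro mem_affine_3_minus) auto
  moreover have "norm (\<delta> *\<^sub>R a) < e" using \<open>0 < e\<close> \<open>a \<noteq> 0\<close> by (simp add: \<delta>_def)
  ultimately have "x0 - \<delta> *\<^sub>R a \<in> D" using e by (auto simp: dist_norm)
  from min[OF this] have "\<delta> * (a \<bullet> a) \<le> 0" by simp
  moreover have "0 < \<delta>" using \<open>0 < e\<close> \<open>a \<noteq> 0\<close> by (simp add: \<delta>_def)
  ultimately have "a \<bullet> a \<le> 0" by (simp add: mult_le_0_iff)
  then show False using \<open>a \<noteq> 0\<close> inner_self_nonpos_imp_zero by blast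
qed

lemma convex_min_subgradient_affine_hull:
  fixes h :: "'a::euclidean_space \<Rightarrow> ereal"
  assumes cvx: "convex_fun h" and nm: "\<And>u. h u \<noteq> -\<infinity>" and "convex Q" "xs \<in> Q" "h xs < \<infinity>"
    and min: "\<And>x. x \<in> Q \<Longrightarrow> h xs \<le> h x"
    and x0: "x0 \<in> Q" "x0 \<in> rel_interior (edom h)"
  obtains g where "g \<in> convex_subdiff h xs" "-g \<in> normal_cone (Q \<inter> affine hull edom h) xs"
proof -
  define A where "A = affine hull edom h"
  obtain hs where hs: "h xs = ereal hs" using assms(5) nm[of xs] by (cases "h xs") auto
  obtain a \<alpha> where nz: "(a, \<alpha>) \<noteq> 0" and aA: "xs + a \<in> A"
    and sep: "\<And>x t x' t'. h x \<le> ereal t \<Longrightarrow> x' \<in> Q \<inter> A \<Longrightarrow> t' < hs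
      \<Longrightarrow> 0 \<le> a \<bullet> (x - x') + \<alpha> * (t - t')"
    using convex_min_epigraph_separation[OF cvx assms(3,4) hs min] unfolding A_def by blast
  have xsA: "xs \<in> A" using assms(5) hull_subset[of "edom h"] by (force simp: A_def edom_def)
  have x0A: "x0 \<in> A" using x0(2) rel_interior_subset hull_subset[of "edom h"] by (force simp: A_def)
  have "0 \<le> \<alpha>" using sep[of xs hs xs "hs - 1"] hs assms(4) xsA by simp
  moreover have "\<alpha> \<noteq> 0"
  proof
    assume "\<alpha> = 0"
    have "0 \<le> a \<bullet> (x - x0)" if "x \<in> edom h" for x
      using sep[of x "real_of_ereal (h x)" x0 "hs - 1"] that x0(1) x0A \<open>\<alpha> = 0\<close>
      by (simp add: edom_def le_ereal_real_of_ereal)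
    then have "a = 0"
      using rel_interior_minimizer_parallel_zero[OF x0(2)] xsA aA unfolding A_def by blast
    then show False using nz \<open>\<alpha> = 0\<close> by (simp add: zero_prod_def)
  qed
  ultimately have "0 < \<alpha>" by simp
  define g where "g = - (1 / \<alpha>) *\<^sub>R a"
  show thesis
  proof
    have "h xs + ereal (g \<bullet> (y - xs)) \<le> h y" for y
    proof (cases "h y")
      case (real t)
      have "0 \<le> (a \<bullet> (y - xs) + \<alpha> * (t - hs)) + \<alpha> * (hs - t')" if "t' < hs" for t'
        using sep[of y t xs t'] real that assms(4) xsA by (simp add: algebra_simps)
      then have "0 \<le> a \<bullet> (y - xs) + \<alpha> * (t - hs)" by (rule nonneg_of_nonneg_below)
      then have "hs + g \<bullet> (y - xs) \<le> t"
        using \<open>0 < \<alpha>\<close> by (simp add: g_def field_simps)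
      then show ?thesis using hs real by simp
    qed (use nm in auto)
    then show "g \<in> convex_subdiff h xs" using hs by (simp add: convex_subdiff_def)
    have "0 \<le> g \<bullet> (x' - xs)" if "x' \<in> Q \<inter> A" for x'
    proof -
      have "0 \<le> a \<bullet> (xs - x') + \<alpha> * (hs - t')" if "t' < hs" for t'
        using sep[of xs hs x' t'] hs \<open>x' \<in> Q \<inter> A\<close> that by simp
      then have "0 \<le> a \<bullet> (xs - x')" by (rule nonneg_of_nonneg_below)
      then show ?thesis using \<open>0 < \<alpha>\<close> by (simp add: g_def inner_diff_right divide_right_mono)
    qed
    then show "-g \<in> normal_cone (Q \<inter> affine hull edom h) xs"
      by (simp add: normal_cone_def A_def)
  qed
qed

lemma convex_min_on_polyhedron_subgradient:
  fixes h :: "'a::euclidean_space \<Rightarrow> ereal"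
  assumes "convex_fun h" "\<And>u. h u \<noteq> -\<infinity>" "polyhedron Q" "xs \<in> Q" "h xs < \<infinity>"
    and "\<And>x. x \<in> Q \<Longrightarrow> h xs \<le> h x"
    and "x0 \<in> Q" "x0 \<in> rel_interior (edom h)"
  obtains g where "g \<in> convex_subdiff h xs" "-g \<in> normal_cone Q xs"
proof -
  obtain g where g: "g \<in> convex_subdiff h xs" "-g \<in> normal_cone (Q \<inter> affine hull edom h) xs"
    using convex_min_subgradient_affine_hull assms polyhedron_imp_convex by metis
  have "xs \<in> affine hull edom h"
    using assms(5) hull_subset[of "edom h"] by (force simp: edom_def)
  then obtain n1 n2 where n: "n1 \<in> normal_cone Q xs" "n2 \<in> normal_cone (affine hull edom h) xs" "-g = n1 + n2"
    using normal_cone_Int_polyhedra[OF assms(3) affine_imp_polyhedron assms(4) _ g(2)] by auto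
  have "g + n2 \<in> convex_subdiff h xs" by (rule convex_subdiff_add_normal_affine_hull[OF g(1) n(2)])
  moreover have "-(g + n2) = n1" using n(3) by (simp add: algebra_simps)
  ultimately show thesis using that n(1) by metis
qed

section \<open>Optimality conditions for a linearly coupled sum\<close>

text \<open>A polyhedral function is traded for the polyhedral constraint \<open>epi \<phi>\<close> and the linear
  objective \<open>t\<close>; this is why only the domain, not its relative interior, enters the Slater
  condition for polyhedral functions.\<close>
definition lift_obj :: "('a::euclidean_space \<Rightarrow> ereal) \<Rightarrow> 'a \<times> real \<Rightarrow> ereal" where
  "lift_obj \<phi> p = (if polyhedral_fun \<phi> then ereal (snd p) else \<phi> (fst p))"

definition lift_con :: "('a::euclidean_space \<Rightarrow> ereal) \<Rightarrow> ('a \<times> real) set" where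
  "lift_con \<phi> = (if polyhedral_fun \<phi> then epi \<phi> else UNIV)"

definition slater_dom :: "('a::euclidean_space \<Rightarrow> ereal) \<Rightarrow> 'a set" where
  "slater_dom \<phi> = (if polyhedral_fun \<phi> then edom \<phi> else rel_interior (edom \<phi>))"

lemma convex_fun_lift_obj:
  assumes "convex_fun \<phi>"
  shows "convex_fun (lift_obj \<phi>)"
proof (cases "polyhedral_fun \<phi>")
  case True
  then show ?thesis unfolding lift_obj_def using convex_fun_linear[OF linear_snd] by simp
next
  case False
  then show ?thesis unfolding lift_obj_def using convex_fun_linear_comp[OF assms linear_fst] by simp
qed

lemma lift_obj_neq_minf: "(\<And>u. \<phi> u \<noteq> -\<infinity>) \<Longrightarrow> lift_obj \<phi> p \<noteq> -\<infinity>"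
  by (simp add: lift_obj_def)

lemma polyhedron_lift_con: "polyhedron (lift_con \<phi>)"
  by (simp add: lift_con_def polyhedral_fun_def)

lemma lift_obj_ge: "p \<in> lift_con \<phi> \<Longrightarrow> \<phi> (fst p) \<le> lift_obj \<phi> p"
  by (auto simp: lift_con_def lift_obj_def epi_def)

lemma lift_obj_at_value:
  assumes "\<phi> x = ereal t"
  shows "(x, t) \<in> lift_con \<phi>" "lift_obj \<phi> (x, t) = \<phi> x"
  using assms by (simp_all add: lift_con_def lift_obj_def epi_def)

lemma lift_slater_point:
  assumes "convex_fun \<phi>" "\<And>u. \<phi> u \<noteq> -\<infinity>" "x \<in> slater_dom \<phi>"
  obtains t where "(x, t) \<in> lift_con \<phi>" "(x, t) \<in> rel_interior (edom (lift_obj \<phi>))"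
proof -
  have "x \<in> edom \<phi>" using assms(3) rel_interior_subset by (auto simp: slater_dom_def split: if_splits)
  then obtain t where t: "\<phi> x = ereal t" using assms(2)[of x] by (cases "\<phi> x") (auto simp: edom_def)
  have "edom (lift_obj \<phi>) = (if polyhedral_fun \<phi> then UNIV else edom \<phi> \<times> UNIV)"
    by (auto simp: edom_def lift_obj_def)
  then have "rel_interior (edom (lift_obj \<phi>))
      = (if polyhedral_fun \<phi> then UNIV else rel_interior (edom \<phi>) \<times> UNIV)"
    using convex_edom[OF assms(1)] by (simp add: rel_interior_Times)
  moreover have "(x, t) \<in> (if polyhedral_fun \<phi> then UNIV else rel_interior (edom \<phi>) \<times> UNIV)"
    using assms(3) by (simp add: slater_dom_def split: if_splits)
  ultimately show thesis using that[of t] lift_obj_at_value(1)[of \<phi> x t, OF t] by simp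
qed

lemma lift_subgradient:
  assumes nm: "\<And>u. \<phi> u \<noteq> -\<infinity>" and t: "\<phi> x = ereal t"
    and g: "g \<in> convex_subdiff (lift_obj \<phi>) (x, t)"
    and n: "n \<in> normal_cone (lift_con \<phi>) (x, t)" and vert: "snd (g + n) = 0"
  shows "fst (g + n) \<in> convex_subdiff \<phi> x"
proof (cases "polyhedral_fun \<phi>")
  case True
  have "\<forall>y s. t + (fst g \<bullet> (y - x) + snd g * (s - t)) \<le> s"
    using g True unfolding convex_subdiff_def lift_obj_def by (simp add: inner_prod_def)
  then have sub: "t + fst g \<bullet> (y - x) + snd g * (s - t) \<le> s" for y s
    by (simp add: add.assoc)
  have "fst g \<bullet> fst g \<le> 0" using sub[of "x + fst g" t] by simp
  then have "fst g = 0" by (rule inner_self_nonpos_imp_zero)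
  moreover have "snd g = 1" using sub[of x "t + 1"] sub[of x "t - 1"] by simp
  ultimately have n': "n = (fst (g + n), -1)" using vert by (simp add: prod_eq_iff)
  have "\<phi> x + ereal (fst (g + n) \<bullet> (y - x)) \<le> \<phi> y" for y
  proof (cases "\<phi> y")
    case (real s)
    then have "(y, s) \<in> lift_con \<phi>" using True by (simp add: lift_con_def epi_def)
    then have "n \<bullet> ((y, s) - (x, t)) \<le> 0" using n unfolding normal_cone_def by blast
    then show ?thesis using real t by (subst (asm) n') (simp add: inner_prod_def)
  qed (use t nm in auto)
  then show ?thesis using t by (simp add: convex_subdiff_def)
next
  case False
  then have "n = 0" using n by (simp add: lift_con_def normal_cone_UNIV)
  have "lift_obj \<phi> (x, t) + ereal (g \<bullet> ((y, t) - (x, t))) \<le> lift_obj \<phi> (y, t)" for y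
    using g unfolding convex_subdiff_def by blast
  then have "\<phi> x + ereal (fst g \<bullet> (y - x)) \<le> \<phi> y" for y
    using False by (simp add: lift_obj_def inner_prod_def)
  then show ?thesis using t \<open>n = 0\<close> by (simp add: convex_subdiff_def)
qed

text \<open>The variables are \<open>((p, t), ((y, s), z))\<close>: \<open>p = M (y, z)\<close> is the argument of \<open>F\<close>,
  and \<open>t\<close>, \<open>s\<close> are the epigraph variables of \<open>F\<close> and \<open>H\<close>.\<close>
definition coupled_obj ::
  "('p::euclidean_space \<Rightarrow> ereal) \<Rightarrow> ('y::euclidean_space \<Rightarrow> ereal) \<Rightarrow> 'z::euclidean_space
    \<Rightarrow> ('p \<times> real) \<times> ('y \<times> real) \<times> 'z \<Rightarrow> ereal" where
  "coupled_obj F H c \<xi> =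
     lift_obj F (fst \<xi>) + (lift_obj H (fst (snd \<xi>)) + ereal (c \<bullet> snd (snd \<xi>)))"

definition coupled_graph ::
  "('y \<times> 'z \<Rightarrow> 'p) \<Rightarrow> ('y \<times> 'z) set \<Rightarrow> (('p \<times> real) \<times> ('y \<times> real) \<times> 'z) set" where
  "coupled_graph M L = {\<xi>. fst (fst \<xi>) = M (fst (fst (snd \<xi>)), snd (snd \<xi>))
     \<and> (fst (fst (snd \<xi>)), snd (snd \<xi>)) \<in> L}"

lemma subspace_coupled_graph:
  assumes "linear M" "subspace L"
  shows "subspace (coupled_graph M L)"
proof -
  have "M (a + a', b + b') = M (a, b) + M (a', b')" for a a' b b'
    using linear_add[OF assms(1), of "(a, b)" "(a', b')"] by simp
  moreover have "M (r *\<^sub>R a, r *\<^sub>R b) = r *\<^sub>R M (a, b)" for r a b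
    using linear_scale[OF assms(1), of r "(a, b)"] by simp
  moreover have "(a + a', b + b') \<in> L" if "(a, b) \<in> L" "(a', b') \<in> L" for a a' b b'
    using subspace_add[OF assms(2) that] by simp
  moreover have "(r *\<^sub>R a, r *\<^sub>R b) \<in> L" if "(a, b) \<in> L" for r a b
    using subspace_scale[OF assms(2) that] by simp
  moreover have "M (0, 0) = 0" "(0, 0) \<in> L"
    using linear_0[OF assms(1)] subspace_0[OF assms(2)] by (simp_all add: zero_prod_def)
  ultimately show ?thesis unfolding subspace_def coupled_graph_def by auto
qed

lemma convex_fun_coupled_obj:
  fixes F :: "'p::euclidean_space \<Rightarrow> ereal" and H :: "'y::euclidean_space \<Rightarrow> ereal"
  assumes "convex_fun F" "\<And>u. F u \<noteq> -\<infinity>" "convex_fun H" "\<And>u. H u \<noteq> -\<infinity>"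
  shows "convex_fun (coupled_obj F H c)"
proof -
  have "convex_fun (\<lambda>z. ereal (c \<bullet> z))"
    by (rule convex_fun_linear) (simp add: linear_iff inner_add_right)
  then have "convex_fun (\<lambda>q. lift_obj H (fst q) + ereal (c \<bullet> snd q))"
    by (rule convex_fun_sum_prod[OF convex_fun_lift_obj[OF assms(3)] _ lift_obj_neq_minf[OF assms(4)]]) simp
  then show ?thesis unfolding coupled_obj_def[abs_def]
    by (rule convex_fun_sum_prod[OF convex_fun_lift_obj[OF assms(1)] _ lift_obj_neq_minf[OF assms(2)]])
      (simp add: lift_obj_neq_minf assms(4))
qed

lemma coupled_obj_at_value:
  assumes "F p = ereal r" "H y = ereal s"
  shows "coupled_obj F H c ((p, r), ((y, s), z)) = F p + H y + ereal (c \<bullet> z)"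
  using lift_obj_at_value(2)[of F, OF assms(1)] lift_obj_at_value(2)[of H, OF assms(2)]
  by (simp add: coupled_obj_def add.assoc)

lemma coupled_obj_ge:
  assumes "\<xi> \<in> lift_con F \<times> (lift_con H \<times> UNIV)"
  shows "F (fst (fst \<xi>)) + H (fst (fst (snd \<xi>))) + ereal (c \<bullet> snd (snd \<xi>)) \<le> coupled_obj F H c \<xi>"
  using assms lift_obj_ge[of "fst \<xi>" F] lift_obj_ge[of "fst (snd \<xi>)" H]
  by (auto simp: coupled_obj_def add.assoc mem_Times_iff intro!: add_mono)

lemma rel_interior_edom_coupled_obj:
  assumes "convex_fun F" "\<And>u. F u \<noteq> -\<infinity>" "convex_fun H" "\<And>u. H u \<noteq> -\<infinity>"
  shows "rel_interior (edom (coupled_obj F H c))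
    = rel_interior (edom (lift_obj F)) \<times> (rel_interior (edom (lift_obj H)) \<times> UNIV)"
proof -
  have "a + (b + ereal d) < \<infinity> \<longleftrightarrow> a < \<infinity> \<and> b < \<infinity>" if "a \<noteq> -\<infinity>" "b \<noteq> -\<infinity>" for a b :: ereal and d
    using that by (cases a; cases b) auto
  then have "edom (coupled_obj F H c) = edom (lift_obj F) \<times> (edom (lift_obj H) \<times> UNIV)"
    using lift_obj_neq_minf[of F, OF assms(2)] lift_obj_neq_minf[of H, OF assms(4)]
    by (auto simp: edom_def coupled_obj_def)
  then show ?thesis
    using convex_edom[OF convex_fun_lift_obj[OF assms(1)]] convex_edom[OF convex_fun_lift_obj[OF assms(3)]]
    by (simp add: rel_interior_Times convex_Times)
qed

lemma coupled_lift_optimality: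
  fixes F :: "'p::euclidean_space \<Rightarrow> ereal" and H :: "'y::euclidean_space \<Rightarrow> ereal"
    and M :: "'y \<times> 'z::euclidean_space \<Rightarrow> 'p"
  assumes F: "convex_fun F" "\<And>u. F u \<noteq> -\<infinity>" and H: "convex_fun H" "\<And>u. H u \<noteq> -\<infinity>"
    and M: "linear M" and L: "subspace L" "ws \<in> L"
    and r: "F (M ws) = ereal r" and s: "H (fst ws) = ereal s"
    and min: "\<And>w. w \<in> L \<Longrightarrow> F (M ws) + H (fst ws) + ereal (c \<bullet> snd ws)
      \<le> F (M w) + H (fst w) + ereal (c \<bullet> snd w)"
    and slater: "w0 \<in> L" "M w0 \<in> slater_dom F" "fst w0 \<in> slater_dom H"
  obtains g where "g \<in> convex_subdiff (coupled_obj F H c) ((M ws, r), ((fst ws, s), snd ws))"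
    "-g \<in> normal_cone (coupled_graph M L \<inter> lift_con F \<times> (lift_con H \<times> UNIV))
      ((M ws, r), ((fst ws, s), snd ws))"
proof -
  define Q where "Q = coupled_graph M L \<inter> lift_con F \<times> (lift_con H \<times> (UNIV :: 'z set))"
  define \<xi>s where "\<xi>s = ((M ws, r), ((fst ws, s), snd ws))"
  have "polyhedron Q"
    unfolding Q_def using subspace_coupled_graph[OF M L(1)]
    by (intro polyhedron_Int affine_imp_polyhedron subspace_imp_affine polyhedron_Times
        polyhedron_lift_con polyhedron_UNIV)
  have "\<xi>s \<in> Q"
    using L(2) lift_obj_at_value(1)[of F, OF r] lift_obj_at_value(1)[of H, OF s]
    by (simp add: Q_def \<xi>s_def coupled_graph_def)
  note obj_\<xi>s = coupled_obj_at_value[where F=F and p="M ws" and H=H and y="fst ws", OF r s]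
  have min_Q: "coupled_obj F H c \<xi>s \<le> coupled_obj F H c \<xi>" if "\<xi> \<in> Q" for \<xi>
    using min[of "(fst (fst (snd \<xi>)), snd (snd \<xi>))"] coupled_obj_ge[of \<xi> F H c] that
    by (auto simp: Q_def coupled_graph_def \<xi>s_def obj_\<xi>s)
  obtain t0 where t0: "(M w0, t0) \<in> lift_con F" "(M w0, t0) \<in> rel_interior (edom (lift_obj F))"
    using lift_slater_point[OF F slater(2)] .
  obtain s0 where s0: "(fst w0, s0) \<in> lift_con H" "(fst w0, s0) \<in> rel_interior (edom (lift_obj H))"
    using lift_slater_point[OF H slater(3)] .
  define \<xi>0 where "\<xi>0 = ((M w0, t0), ((fst w0, s0), snd w0))"
  have "\<xi>0 \<in> Q" using t0(1) s0(1) slater(1) by (simp add: \<xi>0_def Q_def coupled_graph_def)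
  moreover have "\<xi>0 \<in> rel_interior (edom (coupled_obj F H c))"
    using t0(2) s0(2) by (simp add: \<xi>0_def rel_interior_edom_coupled_obj[OF F H])
  moreover have "coupled_obj F H c \<xi>s < \<infinity>" by (simp add: \<xi>s_def obj_\<xi>s r s)
  moreover have "coupled_obj F H c \<xi> \<noteq> -\<infinity>" for \<xi>
    using F(2) H(2) by (simp add: coupled_obj_def lift_obj_neq_minf)
  ultimately obtain g where "g \<in> convex_subdiff (coupled_obj F H c) \<xi>s" "-g \<in> normal_cone Q \<xi>s"
    using convex_min_on_polyhedron_subgradient[OF convex_fun_coupled_obj[OF F H] _ \<open>polyhedron Q\<close>
        \<open>\<xi>s \<in> Q\<close> _ min_Q] by blast
  then show thesis using that unfolding Q_def \<xi>s_def by blast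
qed

lemma convex_subdiff_coupled_obj:
  assumes g: "g \<in> convex_subdiff (coupled_obj F H c) ((p, r), ((y, s), z))"
    and r: "F p = ereal r" and s: "H y = ereal s"
  shows "fst g \<in> convex_subdiff (lift_obj F) (p, r)"
    "fst (snd g) \<in> convex_subdiff (lift_obj H) (y, s)" "snd (snd g) = c"
proof -
  have F: "lift_obj F (p, r) = ereal r" and H: "lift_obj H (y, s) = ereal s"
    using lift_obj_at_value(2)[of F, OF r] lift_obj_at_value(2)[of H, OF s] r s by simp_all
  have "fst g \<in> convex_subdiff (lift_obj F) (p, r)"
    and g2: "snd g \<in> convex_subdiff (\<lambda>q. lift_obj H (fst q) + ereal (c \<bullet> snd q)) ((y, s), z)"
    using convex_subdiff_sum_prod[of g "lift_obj F" "\<lambda>q. lift_obj H (fst q) + ereal (c \<bullet> snd q)"]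
      g F H by (simp_all add: coupled_obj_def[abs_def])
  moreover have "fst (snd g) \<in> convex_subdiff (lift_obj H) (y, s)"
    and "snd (snd g) \<in> convex_subdiff (\<lambda>z. ereal (c \<bullet> z)) z"
    using convex_subdiff_sum_prod[OF g2] H by simp_all
  ultimately show "fst g \<in> convex_subdiff (lift_obj F) (p, r)"
    "fst (snd g) \<in> convex_subdiff (lift_obj H) (y, s)" "snd (snd g) = c"
    by (simp_all add: convex_subdiff_linear)
qed

lemma normal_cone_lift_cons:
  assumes "(p, r) \<in> lift_con F" "(y, s) \<in> lift_con H"
    and "n \<in> normal_cone (lift_con F \<times> (lift_con H \<times> UNIV)) ((p, r), ((y, s), z))"
  shows "fst n \<in> normal_cone (lift_con F) (p, r)" "fst (snd n) \<in> normal_cone (lift_con H) (y, s)"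
    "snd (snd n) = 0"
  using assms by (auto simp: normal_cone_Times normal_cone_UNIV mem_Times_iff)

lemma coupled_min_imp_subgradients:
  fixes F :: "'p::euclidean_space \<Rightarrow> ereal" and H :: "'y::euclidean_space \<Rightarrow> ereal"
    and M :: "'y \<times> 'z::euclidean_space \<Rightarrow> 'p"
  assumes F: "convex_fun F" "\<And>u. F u \<noteq> -\<infinity>" and H: "convex_fun H" "\<And>u. H u \<noteq> -\<infinity>"
    and M: "linear M" and L: "subspace L" "ws \<in> L"
    and fin: "F (M ws) < \<infinity>" "H (fst ws) < \<infinity>"
    and min: "\<And>w. w \<in> L \<Longrightarrow> F (M ws) + H (fst ws) + ereal (c \<bullet> snd ws)
      \<le> F (M w) + H (fst w) + ereal (c \<bullet> snd w)"
    and slater: "w0 \<in> L" "M w0 \<in> slater_dom F" "fst w0 \<in> slater_dom H"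
  obtains x v where "x \<in> convex_subdiff F (M ws)" "v \<in> convex_subdiff H (fst ws)"
    "\<And>w. w \<in> L \<Longrightarrow> x \<bullet> M w + v \<bullet> fst w + c \<bullet> snd w = 0"
proof -
  obtain r where r: "F (M ws) = ereal r" using fin(1) F(2) by (cases "F (M ws)") auto
  obtain s where s: "H (fst ws) = ereal s" using fin(2) H(2) by (cases "H (fst ws)") auto
  define \<xi>s where "\<xi>s = ((M ws, r), ((fst ws, s), snd ws))"
  define G where "G = coupled_graph M L"
  define C where "C = lift_con F \<times> (lift_con H \<times> (UNIV :: 'z set))"
  obtain g where g: "g \<in> convex_subdiff (coupled_obj F H c) \<xi>s" "-g \<in> normal_cone (G \<inter> C) \<xi>s"
    using coupled_lift_optimality[OF F H M L r s min slater] unfolding \<xi>s_def G_def C_def by blast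
  have "subspace G" unfolding G_def using M L(1) by (rule subspace_coupled_graph)
  have lifted: "(M ws, r) \<in> lift_con F" "(fst ws, s) \<in> lift_con H"
    using lift_obj_at_value(1)[of F, OF r] lift_obj_at_value(1)[of H, OF s] .
  then have "\<xi>s \<in> G" "\<xi>s \<in> C" using L(2) by (simp_all add: \<xi>s_def G_def C_def coupled_graph_def)
  moreover have "polyhedron G" "polyhedron C"
    using \<open>subspace G\<close> by (simp_all add: C_def affine_imp_polyhedron subspace_imp_affine
        polyhedron_Times polyhedron_lift_con)
  ultimately obtain nl nc where nl: "nl \<in> normal_cone G \<xi>s" and nc: "nc \<in> normal_cone C \<xi>s"
    and "-g = nl + nc"
    using normal_cone_Int_polyhedra g(2) by metis
  note g_parts = convex_subdiff_coupled_obj[OF g(1)[unfolded \<xi>s_def] r s]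
  note nc_parts = normal_cone_lift_cons[OF lifted nc[unfolded C_def \<xi>s_def]]
  have "g + nc = - nl"
    using \<open>-g = nl + nc\<close> by (metis add.inverse_inverse add_diff_cancel diff_conv_add_uminus minus_add_distrib)
  then have orth: "(g + nc) \<bullet> \<xi> = 0" if "\<xi> \<in> G" for \<xi>
    using normal_cone_subspace_orthogonal[OF \<open>subspace G\<close> \<open>\<xi>s \<in> G\<close> nl that] by simp
  text \<open>The epigraph variables are unconstrained in \<open>G\<close>, so the vertical components vanish.\<close>
  have "((0, 1), ((0, 0), 0)) \<in> G" "((0, 0), ((0, 1), 0)) \<in> G"
    using linear_0[OF M] subspace_0[OF L(1)] by (simp_all add: G_def coupled_graph_def zero_prod_def)
  from this[THEN orth]
  have "snd (fst g + fst nc) = 0" "snd (fst (snd g) + fst (snd nc)) = 0"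
    by (simp_all add: inner_prod_def)
  then have "fst (fst g + fst nc) \<in> convex_subdiff F (M ws)"
    "fst (fst (snd g) + fst (snd nc)) \<in> convex_subdiff H (fst ws)"
    using lift_subgradient[where \<phi>=F, OF F(2) r g_parts(1) nc_parts(1)]
      lift_subgradient[where \<phi>=H, OF H(2) s g_parts(2) nc_parts(2)] by simp_all
  moreover have "fst (fst g + fst nc) \<bullet> M w + fst (fst (snd g) + fst (snd nc)) \<bullet> fst w + c \<bullet> snd w = 0"
    if "w \<in> L" for w
  proof -
    have "((M w, 0), ((fst w, 0), snd w)) \<in> G" using that by (simp add: G_def coupled_graph_def)
    from orth[OF this] show ?thesis using g_parts(3) nc_parts(3) by (simp add: inner_prod_def)
  qed
  ultimately show thesis using that by blast
qed

section \<open>The problem (D)\<close>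

definition support_subspace :: "real^'r \<Rightarrow> (real^'r) set" where
  "support_subspace z = {z'. \<forall>i. z $ i = 0 \<longrightarrow> z' $ i = 0}"

lemma subspace_support_subspace: "subspace (support_subspace z)"
  unfolding subspace_def support_subspace_def by simp

lemma eventually_nonzero_coords:
  fixes z :: "real^'r"
  shows "eventually (\<lambda>z'. \<forall>i. z $ i \<noteq> 0 \<longrightarrow> z' $ i \<noteq> 0) (nhds z)"
proof (rule eventually_all_finite)
  fix i
  have "((\<lambda>z'. z' $ i) \<longlongrightarrow> z $ i) (nhds z)" by (intro tendsto_intros filterlim_ident)
  then show "eventually (\<lambda>z'. z $ i \<noteq> 0 \<longrightarrow> z' $ i \<noteq> 0) (nhds z)"
    by (cases "z $ i = 0") (auto dest: tendsto_imp_eventually_ne)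
qed

lemma Psi0_eventually_const_on_support:
  "eventually (\<lambda>z'. z' \<in> support_subspace z \<longrightarrow> Psi0 \<mu> z' = Psi0 \<mu> z) (nhds z)"
  using eventually_nonzero_coords[of z]
proof eventually_elim
  case (elim z')
  then have "z' \<in> support_subspace z \<Longrightarrow> (z' $ i \<noteq> 0) = (z $ i \<noteq> 0)" for i
    unfolding support_subspace_def by blast
  then show ?case unfolding Psi0_def by simp
qed

lemma Psi0_local_subgradient:
  fixes z :: "real^'r"
  assumes "\<forall>i. \<mu> $ i > 0" "u \<in> subdiff_Psi0 z"
  shows "eventually (\<lambda>z'. Psi0 \<mu> z + u \<bullet> (z' - z) \<le> Psi0 \<mu> z') (nhds z)"
proof -
  have "eventually (\<lambda>z'. \<bar>u $ i * (z' $ i - z $ i)\<bar> < \<mu> $ i) (nhds z)" for i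
  proof -
    have "((\<lambda>z'. \<bar>u $ i * (z' $ i - z $ i)\<bar>) \<longlongrightarrow> \<bar>u $ i * (z $ i - z $ i)\<bar>) (nhds z)"
      by (intro tendsto_intros filterlim_ident)
    then show ?thesis using assms(1) by (auto dest: order_tendstoD(2))
  qed
  then have "eventually (\<lambda>z'. \<forall>i. \<bar>u $ i * (z' $ i - z $ i)\<bar> < \<mu> $ i) (nhds z)"
    by (rule eventually_all_finite)
  with eventually_nonzero_coords[of z]
  show ?thesis
  proof eventually_elim
    case (elim z')
    have "\<mu> $ i * (if z $ i \<noteq> 0 then 1 else 0) + u $ i * (z' $ i - z $ i)
        \<le> \<mu> $ i * (if z' $ i \<noteq> 0 then 1 else 0)" for i
    proof (cases "z $ i = 0")
      case True
      then show ?thesis using elim(2)[rule_format, of i] assms(1) by (auto simp: abs_less_iff)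
    next
      case False
      then show ?thesis using elim(1) assms(2) by (simp add: subdiff_Psi0_def)
    qed
    then have "(\<Sum>i\<in>UNIV. \<mu> $ i * (if z $ i \<noteq> 0 then 1 else 0) + u $ i * (z' $ i - z $ i))
        \<le> Psi0 \<mu> z'"
      unfolding Psi0_def by (rule sum_mono)
    then show ?case by (simp add: Psi0_def inner_vec_def sum.distrib)
  qed
qed

definition dual_map :: "real^'n^'m \<Rightarrow> real^'n^'r \<Rightarrow> (real^'m) \<times> (real^'r) \<Rightarrow> real^'n" where
  "dual_map A B w = - (transpose A *v fst w) - (transpose B *v snd w)"

lemma linear_dual_map: "linear (dual_map A B)"
proof -
  have "linear (\<lambda>w. transpose A *v fst w)" "linear (\<lambda>w. transpose B *v snd w)"
    using linear_compose[OF linear_fst matrix_vector_mul_linear]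
      linear_compose[OF linear_snd matrix_vector_mul_linear] by (simp_all add: o_def del: transpose_matrix_vector)
  then show ?thesis unfolding dual_map_def[abs_def] by (intro linear_compose_sub linear_compose_neg)
qed

lemma inner_transpose_mult: "x \<bullet> (transpose A *v y) = (A *v x) \<bullet> (y :: real^'m)"
proof -
  have "x \<bullet> (transpose A *v y) = (y v* A) \<bullet> x" by (simp add: inner_commute)
  also have "\<dots> = y \<bullet> (A *v x)" by (rule dot_lmul_matrix)
  finally show ?thesis by (simp add: inner_commute)
qed

lemma inner_dual_map: "x \<bullet> dual_map A B w = - ((A *v x) \<bullet> fst w) - ((B *v x) \<bullet> snd w)"
  by (simp only: dual_map_def inner_diff_right inner_minus_right inner_transpose_mult)

lemma Xi_dual_map: "Xi f g A B b w = fconj f (dual_map A B w) + fconj g (fst w) + ereal (b \<bullet> snd w)"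
  by (simp add: Xi_def dual_map_def split: prod.split)

lemma convex_fun_Xi:
  assumes "proper_fun f" "proper_fun g"
  shows "convex_fun (Xi f g A B b)"
proof -
  have "convex_fun (\<lambda>z. ereal (b \<bullet> z))"
    by (rule convex_fun_linear) (simp add: linear_iff inner_add_right)
  then have "convex_fun (\<lambda>w. fconj g (fst w) + ereal (b \<bullet> snd w))"
    by (rule convex_fun_sum_prod[OF convex_fun_fconj[OF assms(2)] _ fconj_neq_minf[OF assms(2)]]) simp
  then show ?thesis unfolding Xi_dual_map[abs_def] add.assoc
    by (rule convex_fun_add[OF convex_fun_linear_comp[OF convex_fun_fconj[OF assms(1)] linear_dual_map]])
      (simp_all add: fconj_neq_minf assms)
qed

lemma Xi_neq_minf: "proper_fun f \<Longrightarrow> proper_fun g \<Longrightarrow> Xi f g A B b w \<noteq> -\<infinity>"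
  by (simp add: Xi_dual_map fconj_neq_minf)

lemma Xi_ge_of_stationary_data:
  assumes "proper_fun f" "proper_fun g"
    and x: "x \<in> limiting_subdiff (fconj f) (dual_map A B w)"
    and v: "v \<in> limiting_subdiff (fconj g) (fst w)"
    and Ax: "A *v x = v" and Bx: "B *v x = b + u"
  shows "Xi f g A B b w \<le> Xi f g A B b w' + ereal (u \<bullet> (snd w' - snd w))"
proof -
  have x': "x \<in> convex_subdiff (fconj f) (dual_map A B w)"
    and v': "v \<in> convex_subdiff (fconj g) (fst w)"
    using x v limiting_subdiff_convex convex_fun_fconj fconj_neq_minf assms(1,2) by blast+
  then obtain a c where a: "fconj f (dual_map A B w) = ereal a" and c: "fconj g (fst w) = ereal c"
    by (auto simp: convex_subdiff_def)
  have F: "ereal (a + x \<bullet> dual_map A B (w' - w)) \<le> fconj f (dual_map A B w')"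
    using x' a by (simp add: convex_subdiff_def linear_diff[OF linear_dual_map])
  have H: "ereal (c + v \<bullet> (fst w' - fst w)) \<le> fconj g (fst w')"
    using v' c by (simp add: convex_subdiff_def)
  have "x \<bullet> dual_map A B (w' - w) + v \<bullet> (fst w' - fst w) + b \<bullet> snd w' + u \<bullet> (snd w' - snd w) = b \<bullet> snd w"
    using Ax Bx by (simp add: inner_dual_map inner_diff_right inner_add_left)
  then show ?thesis
    using add_mono[OF add_mono[OF F H] order_refl[of "ereal (b \<bullet> snd w')"]]
    unfolding Xi_dual_map a c by (cases "fconj f (dual_map A B w')"; cases "fconj g (fst w')") auto
qed

lemma stationary_imp_local_minimizer:
  assumes "proper_fun f" "proper_fun g" "\<forall>i. \<mu> $ i > 0" and "stationary_D f g A B b w"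
  shows "local_minimizer (Gobj f g A B b \<mu>) w"
proof -
  obtain x v u where x: "x \<in> limiting_subdiff (fconj f) (dual_map A B w)"
    and v: "v \<in> limiting_subdiff (fconj g) (fst w)" and u: "u \<in> subdiff_Psi0 (snd w)"
    and Ax: "A *v x = v" and Bx: "B *v x = b + u"
    using assms(4) by (auto simp: stationary_D_def dual_map_def split: prod.splits)
  have "((\<lambda>w'. snd w') \<longlongrightarrow> snd w) (nhds w)" by (intro tendsto_intros filterlim_ident)
  from eventually_compose_filterlim[OF Psi0_local_subgradient[OF assms(3) u] this]
  have "eventually (\<lambda>w'. Gobj f g A B b \<mu> w \<le> Gobj f g A B b \<mu> w') (nhds w)"
  proof eventually_elim
    case (elim w')
    have "Gobj f g A B b \<mu> w \<le> Xi f g A B b w' + ereal (u \<bullet> (snd w' - snd w)) + ereal (Psi0 \<mu> (snd w))"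
      unfolding Gobj_def using Xi_ge_of_stationary_data[OF assms(1,2) x v Ax Bx] by (rule add_right_mono)
    also have "\<dots> \<le> Gobj f g A B b \<mu> w'"
      using elim unfolding Gobj_def add.assoc plus_ereal.simps by (intro add_left_mono) simp
    finally show ?case .
  qed
  then show ?thesis by (simp add: local_minimizer_iff_eventually)
qed

text \<open>On the support subspace of \<open>zs\<close>, \<open>Psi0\<close> is locally constant, so a local minimizer of
  the objective is a local, hence by convexity a global, minimizer of \<open>Xi\<close> there.\<close>
lemma local_minimizer_imp_Xi_min_on_support:
  assumes "proper_fun f" "proper_fun g"
    and lm: "local_minimizer (Gobj f g A B b \<mu>) (ys, zs)" and fin: "Gobj f g A B b \<mu> (ys, zs) < \<infinity>"
    and "z \<in> support_subspace zs"
  shows "Xi f g A B b (ys, zs) \<le> Xi f g A B b (y, z)"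
proof (rule convex_local_min_imp_min[OF convex_fun_Xi[OF assms(1,2)] Xi_neq_minf[OF assms(1,2)]])
  show "convex (UNIV \<times> support_subspace zs)"
    by (simp add: convex_Times subspace_imp_convex subspace_support_subspace)
  show "Xi f g A B b (ys, zs) < \<infinity>" using fin by (simp add: Gobj_def)
  have "((\<lambda>w. snd w) \<longlongrightarrow> snd (ys, zs)) (nhds (ys, zs))" by (intro tendsto_intros filterlim_ident)
  from eventually_compose_filterlim[OF Psi0_eventually_const_on_support this]
  have "eventually (\<lambda>w. snd w \<in> support_subspace zs \<longrightarrow> Psi0 \<mu> (snd w) = Psi0 \<mu> zs) (nhds (ys, zs))"
    by simp
  then show "eventually (\<lambda>w. w \<in> UNIV \<times> support_subspace zs
      \<longrightarrow> Xi f g A B b (ys, zs) \<le> Xi f g A B b w) (nhds (ys, zs))"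
    using lm unfolding local_minimizer_iff_eventually
    by eventually_elim (auto simp: Gobj_def mem_Times_iff ereal_add_le_add_iff2)
qed (use assms(5) in \<open>auto simp: support_subspace_def\<close>)

lemma Xi_min_on_support_imp_stationary:
  fixes f :: "real^'n \<Rightarrow> ereal" and g :: "real^'m \<Rightarrow> ereal"
    and A :: "real^'n^'m" and B :: "real^'n^'r" and b :: "real^'r"
  assumes f: "proper_fun f" and g: "proper_fun g"
    and fin: "Xi f g A B b (ys, zs) < \<infinity>"
    and min: "\<And>y z. z \<in> support_subspace zs \<Longrightarrow> Xi f g A B b (ys, zs) \<le> Xi f g A B b (y, z)"
    and "slater_D f g A B zs"
  shows "stationary_D f g A B b (ys, zs)"
proof -
  define L :: "((real^'m) \<times> (real^'r)) set" where "L = UNIV \<times> support_subspace zs"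
  obtain y0 z0 where slater: "(y0, z0) \<in> L" "dual_map A B (y0, z0) \<in> slater_dom (fconj f)"
    "fst (y0, z0) \<in> slater_dom (fconj g)"
    using assms(5) by (auto simp: slater_D_def slater_dom_def L_def support_subspace_def dual_map_def)
  have "subspace L" by (simp add: L_def subspace_Times subspace_support_subspace)
  have "(ys, zs) \<in> L" by (simp add: L_def support_subspace_def)
  have fin': "fconj f (dual_map A B (ys, zs)) < \<infinity>" "fconj g (fst (ys, zs)) < \<infinity>"
    using fin fconj_neq_minf[OF f] fconj_neq_minf[OF g] by (auto simp: Xi_dual_map)
  have "fconj f (dual_map A B (ys, zs)) + fconj g (fst (ys, zs)) + ereal (b \<bullet> snd (ys, zs))
      \<le> fconj f (dual_map A B w) + fconj g (fst w) + ereal (b \<bullet> snd w)" if "w \<in> L" for w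
    using min[of "snd w" "fst w"] that by (auto simp: L_def Xi_dual_map mem_Times_iff)
  from coupled_min_imp_subgradients[OF convex_fun_fconj[OF f] fconj_neq_minf[OF f]
      convex_fun_fconj[OF g] fconj_neq_minf[OF g] linear_dual_map \<open>subspace L\<close> \<open>(ys, zs) \<in> L\<close>
      fin' this slater]
  obtain x v where x: "x \<in> convex_subdiff (fconj f) (dual_map A B (ys, zs))"
    and v: "v \<in> convex_subdiff (fconj g) ys"
    and orth: "\<And>w. w \<in> L \<Longrightarrow> x \<bullet> dual_map A B w + v \<bullet> fst w + b \<bullet> snd w = 0"
    by auto
  have orth': "(v - A *v x) \<bullet> y + (b - B *v x) \<bullet> z = 0" if "z \<in> support_subspace zs" for y z
    using orth[of "(y, z)"] that by (simp add: L_def inner_dual_map algebra_simps inner_diff_left)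
  have "A *v x = v" using orth'[of 0 "v - A *v x"] by (simp add: support_subspace_def)
  moreover have "B *v x - b \<in> subdiff_Psi0 zs"
  proof (unfold subdiff_Psi0_def, intro CollectI allI impI)
    fix i assume "zs $ i \<noteq> 0"
    then have "axis i 1 \<in> support_subspace zs" by (auto simp: support_subspace_def axis_def)
    from orth'[OF this, of 0] show "(B *v x - b) $ i = 0" by (simp add: inner_axis)
  qed
  moreover have "x \<in> limiting_subdiff (fconj f) (- (transpose A *v ys) - (transpose B *v zs))"
    using x convex_subdiff_subset_limiting unfolding dual_map_def fst_conv snd_conv by blast
  moreover have "v \<in> limiting_subdiff (fconj g) ys" using v convex_subdiff_subset_limiting by blast
  moreover have "B *v x = b + (B *v x - b)" by simp
  ultimately show ?thesis unfolding stationary_D_def prod.case by blast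
qed

theorem mainTheorem16:
  fixes f :: "real^'n \<Rightarrow> ereal" and g :: "real^'m \<Rightarrow> ereal"
    and A :: "real^'n^'m" and B :: "real^'n^'r" and b \<mu> :: "real^'r"
  assumes "proper_fun f" "lsc_fun f" "convex_fun f"
    and "proper_fun g" "lsc_fun g" "convex_fun g"
    and "\<forall>i. \<mu> $ i > 0"
  shows "(\<forall>w. stationary_D f g A B b w \<longrightarrow> local_minimizer (Gobj f g A B b \<mu>) w)
       \<and> (\<forall>y z. local_minimizer (Gobj f g A B b \<mu>) (y, z) \<and> Gobj f g A B b \<mu> (y, z) < \<infinity>
              \<and> slater_D f g A B z \<longrightarrow> stationary_D f g A B b (y, z))"
proof (intro conjI allI impI)
  fix w assume "stationary_D f g A B b w"
  then show "local_minimizer (Gobj f g A B b \<mu>) w"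
    using stationary_imp_local_minimizer assms(1,4,7) by blast
next
  fix y z
  assume lm: "local_minimizer (Gobj f g A B b \<mu>) (y, z) \<and> Gobj f g A B b \<mu> (y, z) < \<infinity>
    \<and> slater_D f g A B z"
  then have "Xi f g A B b (y, z) \<le> Xi f g A B b (y', z')" if "z' \<in> support_subspace z" for y' z'
    using local_minimizer_imp_Xi_min_on_support assms(1,4) that by blast
  moreover have "Xi f g A B b (y, z) < \<infinity>" using lm by (simp add: Gobj_def)
  ultimately show "stationary_D f g A B b (y, z)"
    using Xi_min_on_support_imp_stationary assms(1,4) lm by blast
qed

end
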